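(* For any orientation-preserving homeomorphism $f:\mathbb{S}^1\to\mathbb{S}^1$, the induced map $C(f):C(\mathbb{S}^1)\to C(\mathbb{S}^1)$ satisfies $h_{\mathrm{pol}}(C(f))\le 2$.
   Context: $C(\mathbb{S}^1)$ is the set of all nonempty closed connected subsets of $\mathbb{S}^1$ with the Hausdorff metric $d_H(A,B)=\inf\{\varepsilon>0: A\subset U(B,\varepsilon),\ B\subset U(A,\varepsilon)\}$, $U(A,\varepsilon)=\{x: d(x,A)<\varepsilon\}$; $C(f)(A)=f(A)$. For a continuous map $g:Z\to Z$ of a compact metric space $(Z,\rho)$, define $\rho^g_n(x,y)=\max_{0\le k\le n-1}\rho(g^k(x),g^k(y))$; a finite set $E\subset Z$ is $(n,\varepsilon)$-separated if $\rho^g_n(x,y)\ge\varepsilon$ for all distinct $x,y\in E$; $\mathrm{sep}(n,\varepsilon)$ is the maximal cardinality of such a set; and $h_{\mathrm{pol}}(g)=\lim_{\varepsilon\to0}\limsup_{n\to\infty}\frac{\log \mathrm{sep}(n,\varepsilon)}{\log n}$. *)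

theory Defs
  imports "HOL-Analysis.Analysis"
begin

definition S1 :: "complex set" where
  "S1 = sphere 0 1"

definition orient_pres_homeo :: "(complex \<Rightarrow> complex) \<Rightarrow> bool" where
  "orient_pres_homeo f \<longleftrightarrow>
     (\<exists>g. homeomorphism S1 S1 f g) \<and>
     (\<exists>F :: real \<Rightarrow> real. continuous_on UNIV F \<and> strict_mono F \<and>
        (\<forall>x. F (x + 1) = F x + 1) \<and>
        (\<forall>x. f (cis (2 * pi * x)) = cis (2 * pi * F x)))"

definition Unbhd :: "complex set \<Rightarrow> real \<Rightarrow> complex set" where
  "Unbhd A e = {x. infdist x A < e}"

definition dH :: "complex set \<Rightarrow> complex set \<Rightarrow> real" where
  "dH A B = Inf {e. e > 0 \<and> A \<subseteq> Unbhd B e \<and> B \<subseteq> Unbhd A e}"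

definition CS1 :: "complex set set" where
  "CS1 = {A. A \<subseteq> S1 \<and> A \<noteq> {} \<and> closed A \<and> connected A}"

definition Cmap :: "(complex \<Rightarrow> complex) \<Rightarrow> complex set \<Rightarrow> complex set" where
  "Cmap f A = f ` A"

definition bowen_dist :: "('a \<Rightarrow> 'a \<Rightarrow> real) \<Rightarrow> ('a \<Rightarrow> 'a) \<Rightarrow> nat \<Rightarrow> 'a \<Rightarrow> 'a \<Rightarrow> real" where
  "bowen_dist rho g n x y = (MAX k \<in> {..<n}. rho ((g ^^ k) x) ((g ^^ k) y))"

definition separated_set ::
  "('a \<Rightarrow> 'a \<Rightarrow> real) \<Rightarrow> ('a \<Rightarrow> 'a) \<Rightarrow> nat \<Rightarrow> real \<Rightarrow> 'a set \<Rightarrow> bool" where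
  "separated_set rho g n e E \<longleftrightarrow> finite E \<and>
     (\<forall>x\<in>E. \<forall>y\<in>E. x \<noteq> y \<longrightarrow> bowen_dist rho g n x y \<ge> e)"

definition sep :: "('a \<Rightarrow> 'a \<Rightarrow> real) \<Rightarrow> 'a set \<Rightarrow> ('a \<Rightarrow> 'a) \<Rightarrow> nat \<Rightarrow> real \<Rightarrow> real" where
  "sep rho Z g n e = Sup {real (card E) | E. E \<subseteq> Z \<and> separated_set rho g n e E}"

definition h_pol :: "('a \<Rightarrow> 'a \<Rightarrow> real) \<Rightarrow> 'a set \<Rightarrow> ('a \<Rightarrow> 'a) \<Rightarrow> ereal" where
  "h_pol rho Z g = Lim (at_right 0)
     (\<lambda>e. limsup (\<lambda>n. ereal (ln (sep rho Z g n e) / ln (real n))))"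

end

theory Submission
  imports Defs
begin

text \<open>Every subcontinuum of the circle is an arc, the image of an interval [a, b] with
  0 <= a <= b <= 2 under x |-> cis (2 pi x). If F is a monotone degree-one lift of f, the k-th
  image of that arc is the image of [F^k a, F^k b]. Code a real x by the integer
  sum_{k<n} floor (N F^k x). The code is monotone in x, so equal codes force all summands to
  agree: the orbits of the two points stay within 1/N of each other for n steps, and two arcs
  whose endpoints have equal codes stay within 2 pi / N in the Hausdorff metric for n steps.
  Codes of points of [0, 2] take at most 2Nn + 1 values, hence an (n, e)-separated family of
  subcontinua with 2 pi / N < e has at most (2Nn + 1)^2 members. A bound C n^2 on separated
  sets for every e gives polynomial entropy at most 2.\<close>

section \<open>Polynomial entropy from polynomial bounds on separated sets\<close>

lemma separated_set_singleton: "separated_set rho g n e {x}"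
  by (simp add: separated_set_def)

lemma separated_set_antimono:
  "e \<le> e' \<Longrightarrow> separated_set rho g n e' E \<Longrightarrow> separated_set rho g n e E"
  unfolding separated_set_def by (meson order_trans)

lemma sep_bounds:
  assumes "x \<in> Z" "\<And>E. E \<subseteq> Z \<Longrightarrow> separated_set rho g n e E \<Longrightarrow> real (card E) \<le> B"
  shows "1 \<le> sep rho Z g n e" "sep rho Z g n e \<le> B"
proof -
  have one: "1 \<in> {real (card E) | E. E \<subseteq> Z \<and> separated_set rho g n e E}"
    using assms(1) separated_set_singleton[of rho g n e x] by (intro CollectI exI[of _ "{x}"]) simp
  have "bdd_above {real (card E) | E. E \<subseteq> Z \<and> separated_set rho g n e E}"
    using assms(2) by (intro bdd_aboveI[of _ B]) blast
  then show "1 \<le> sep rho Z g n e"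
    unfolding sep_def using one by (rule cSup_upper[rotated])
  show "sep rho Z g n e \<le> B"
    unfolding sep_def using one assms(2) by (intro cSup_least) auto
qed

lemma sep_antimono:
  assumes "x \<in> Z" "e \<le> e'" "\<And>E. E \<subseteq> Z \<Longrightarrow> separated_set rho g n e E \<Longrightarrow> real (card E) \<le> B"
  shows "sep rho Z g n e' \<le> sep rho Z g n e"
  unfolding sep_def
proof (rule cSup_subset_mono)
  show "{real (card E) | E. E \<subseteq> Z \<and> separated_set rho g n e' E} \<noteq> {}"
    using assms(1) separated_set_singleton[of rho g n e' x] by blast
  show "bdd_above {real (card E) | E. E \<subseteq> Z \<and> separated_set rho g n e E}"
    using assms(3) by (intro bdd_aboveI[of _ B]) blast
  show "{real (card E) | E. E \<subseteq> Z \<and> separated_set rho g n e' E}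
      \<subseteq> {real (card E) | E. E \<subseteq> Z \<and> separated_set rho g n e E}"
    using separated_set_antimono[OF assms(2)] by blast
qed

lemma limsup_ln_ratio_le:
  assumes "C > 0" "eventually (\<lambda>n. 1 \<le> s n \<and> s n \<le> C * real n powr d) sequentially"
  shows "limsup (\<lambda>n. ereal (ln (s n) / ln (real n))) \<le> ereal d"
proof -
  have "eventually (\<lambda>n. ereal (ln (s n) / ln (real n)) \<le> ereal (d + ln C / ln (real n))) sequentially"
    using assms(2) eventually_ge_at_top[of 2]
  proof eventually_elim
    case (elim n)
    then have "ln (real n) > 0"
      by simp
    have "ln (s n) \<le> ln (C * real n powr d)"
      using elim by simp
    also have "\<dots> = ln C + d * ln (real n)"
      using assms(1) elim by (simp add: ln_mult ln_powr)
    finally show ?case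
      using \<open>ln (real n) > 0\<close> by (simp add: field_simps)
  qed
  then have "limsup (\<lambda>n. ereal (ln (s n) / ln (real n)))
      \<le> limsup (\<lambda>n. ereal (d + ln C / ln (real n)))"
    by (rule Limsup_mono)
  also have "\<dots> = ereal d"
  proof (rule lim_imp_Limsup[OF trivial_limit_sequentially])
    have "((\<lambda>n. ln C / ln (real n)) \<longlongrightarrow> 0) sequentially"
      by (intro tendsto_divide_0[OF tendsto_const] filterlim_at_top_imp_at_infinity
          filterlim_compose[OF ln_at_top filterlim_real_sequentially])
    then show "((\<lambda>n. ereal (d + ln C / ln (real n))) \<longlongrightarrow> ereal d) sequentially"
      using tendsto_add[OF tendsto_const, of _ 0 sequentially d] by (simp add: lim_ereal)
  qed
  finally show ?thesis .
qed

lemma tendsto_SUP_at_right_0_antimono: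
  fixes phi :: "real \<Rightarrow> 'a::{complete_linorder, linorder_topology}"
  assumes "\<And>e e'. 0 < e \<Longrightarrow> e \<le> e' \<Longrightarrow> phi e' \<le> phi e"
  shows "(phi \<longlongrightarrow> (SUP e\<in>{0<..}. phi e)) (at_right 0)"
proof (rule order_tendstoI)
  fix y assume "y < (SUP e\<in>{0<..}. phi e)"
  then obtain e0 where "e0 > 0" "y < phi e0"
    by (auto simp: less_SUP_iff)
  then show "eventually (\<lambda>e. y < phi e) (at_right 0)"
    unfolding eventually_at_right_field using assms
    by (intro exI[of _ e0]) (auto intro: less_le_trans)
next
  fix y assume "(SUP e\<in>{0<..}. phi e) < y"
  then show "eventually (\<lambda>e. phi e < y) (at_right 0)"
    unfolding eventually_at_right_field
    by (intro exI[of _ 1]) (auto intro: le_less_trans[OF SUP_upper])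
qed

lemma limsup_ln_sep_le:
  assumes "x \<in> Z"
    and "\<And>n E. n \<ge> 1 \<Longrightarrow> E \<subseteq> Z \<Longrightarrow> separated_set rho g n e E \<Longrightarrow>
      real (card E) \<le> C * real n powr d"
  shows "limsup (\<lambda>n. ereal (ln (sep rho Z g n e) / ln (real n))) \<le> ereal d"
proof (rule limsup_ln_ratio_le)
  show "C > 0"
    using assms(2)[of 1 "{x}"] assms(1) separated_set_singleton[of rho g 1 e x] by simp
  show "eventually (\<lambda>n. 1 \<le> sep rho Z g n e \<and> sep rho Z g n e \<le> C * real n powr d) sequentially"
    using eventually_ge_at_top[of 1]
  proof eventually_elim
    case (elim n)
    have "real (card E) \<le> C * real n powr d"
      if "E \<subseteq> Z" "separated_set rho g n e E" for E
      using assms(2) elim that by blast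
    from sep_bounds[OF assms(1) this] show ?case
      by simp
  qed
qed

lemma limsup_ln_sep_antimono:
  assumes "x \<in> Z" "e \<le> e'"
    and "\<And>n E. n \<ge> 1 \<Longrightarrow> E \<subseteq> Z \<Longrightarrow> separated_set rho g n e E \<Longrightarrow> real (card E) \<le> B n"
  shows "limsup (\<lambda>n. ereal (ln (sep rho Z g n e') / ln (real n)))
    \<le> limsup (\<lambda>n. ereal (ln (sep rho Z g n e) / ln (real n)))"
proof (rule Limsup_mono)
  show "eventually (\<lambda>n. ereal (ln (sep rho Z g n e') / ln (real n))
      \<le> ereal (ln (sep rho Z g n e) / ln (real n))) sequentially"
    using eventually_ge_at_top[of 1]
  proof eventually_elim
    case (elim n)
    have bound: "real (card E) \<le> B n" if "E \<subseteq> Z" "separated_set rho g n e E" for E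
      using assms(3) elim that by blast
    have "1 \<le> sep rho Z g n e'"
      using bound separated_set_antimono[OF assms(2)]
      by (intro sep_bounds(1)[OF assms(1), where B = "B n"]) blast
    moreover have "sep rho Z g n e' \<le> sep rho Z g n e"
      using assms(1,2) bound by (rule sep_antimono)
    ultimately have "ln (sep rho Z g n e') \<le> ln (sep rho Z g n e)"
      by simp
    then show ?case
      using elim by (simp add: divide_right_mono)
  qed
qed

theorem h_pol_le_of_card_separated_le:
  assumes "Z \<noteq> {}"
    and "\<And>e. e > 0 \<Longrightarrow> \<exists>C. \<forall>n\<ge>1. \<forall>E\<subseteq>Z.
           separated_set rho g n e E \<longrightarrow> real (card E) \<le> C * real n powr d"
  shows "h_pol rho Z g \<le> ereal d"
proof -
  obtain x where x: "x \<in> Z"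
    using assms(1) by blast
  define phi where "phi = (\<lambda>e. limsup (\<lambda>n. ereal (ln (sep rho Z g n e) / ln (real n))))"
  have phi_le: "phi e \<le> ereal d" if e: "e > 0" for e
  proof -
    obtain C where "\<And>n E. n \<ge> 1 \<Longrightarrow> E \<subseteq> Z \<Longrightarrow> separated_set rho g n e E \<Longrightarrow>
        real (card E) \<le> C * real n powr d"
      using assms(2)[OF e] by blast
    then show ?thesis
      unfolding phi_def by (rule limsup_ln_sep_le[OF x])
  qed
  have "phi e' \<le> phi e" if e: "0 < e" "e \<le> e'" for e e'
  proof -
    obtain C where "\<And>n E. n \<ge> 1 \<Longrightarrow> E \<subseteq> Z \<Longrightarrow> separated_set rho g n e E \<Longrightarrow>
        real (card E) \<le> C * real n powr d"
      using assms(2)[OF e(1)] by blast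
    then show ?thesis
      unfolding phi_def by (rule limsup_ln_sep_antimono[OF x e(2)])
  qed
  then have "(phi \<longlongrightarrow> (SUP e\<in>{0<..}. phi e)) (at_right 0)"
    by (rule tendsto_SUP_at_right_0_antimono)
  then have "h_pol rho Z g = (SUP e\<in>{0<..}. phi e)"
    unfolding h_pol_def phi_def by (rule tendsto_Lim[OF trivial_limit_at_right_real])
  also have "\<dots> \<le> ereal d"
    using phi_le by (intro SUP_least) simp
  finally show ?thesis .
qed

section \<open>Subcontinua of the circle are arcs\<close>

definition circle_cover :: "real \<Rightarrow> complex" where
  "circle_cover x = cis (2 * pi * x)"

lemma dist_cis_le: "dist (cis a) (cis b) \<le> \<bar>a - b\<bar>"
proof -
  have "cis a - cis b = cis b * (exp (\<i> * of_real (a - b)) - 1)"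
    by (simp add: cis_conv_exp algebra_simps flip: exp_add)
  then have "dist (cis a) (cis b) = 2 * \<bar>sin ((a - b) / 2)\<bar>"
    by (simp add: dist_norm norm_mult del: of_real_diff flip: dist_exp_i_1)
  also have "\<dots> \<le> \<bar>a - b\<bar>"
    using abs_sin_x_le_abs_x[of "(a - b) / 2"] by simp
  finally show ?thesis .
qed

lemma dist_circle_cover_le: "dist (circle_cover x) (circle_cover y) \<le> 2 * pi * \<bar>x - y\<bar>"
  using dist_cis_le[of "2 * pi * x" "2 * pi * y"]
  by (simp add: circle_cover_def abs_mult flip: right_diff_distrib)

lemma circle_cover_add: "circle_cover (x + y) = circle_cover x * circle_cover y"
  by (simp add: circle_cover_def cis_mult distrib_left)

lemma circle_cover_of_int: "circle_cover (of_int m) = 1"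
  by (simp add: circle_cover_def)

lemma circle_cover_add_of_int: "circle_cover (x + of_int m) = circle_cover x"
  by (simp add: circle_cover_add circle_cover_of_int)

lemma circle_cover_in_S1: "circle_cover x \<in> S1"
  by (simp add: circle_cover_def S1_def)

lemma circle_cover_Arg2pi: "z \<in> S1 \<Longrightarrow> circle_cover (Arg2pi z / (2 * pi)) = z"
  using Arg2pi_eq[of z] by (simp add: S1_def circle_cover_def cis_conv_exp)

lemma S1_eq_circle_cover_image: "S1 = circle_cover ` {0..1}"
proof
  show "S1 \<subseteq> circle_cover ` {0..1}"
  proof
    fix z assume "z \<in> S1"
    moreover have "Arg2pi z / (2 * pi) \<in> {0..1}"
      using Arg2pi_ge_0[of z] Arg2pi_lt_2pi[of z] by simp
    ultimately show "z \<in> circle_cover ` {0..1}"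
      by (metis circle_cover_Arg2pi image_eqI)
  qed
qed (auto simp: circle_cover_in_S1)

lemma circle_cover_image_shift:
  "circle_cover ` {a + of_int m..b + of_int m} = circle_cover ` {a..b}"
proof -
  have "{a + of_int m..b + of_int m} = (\<lambda>x. x + of_int m) ` {a..b}"
    by (simp add: add.commute)
  then show ?thesis
    by (simp only: image_comp o_def circle_cover_add_of_int)
qed

lemma circle_cover_inverse_off_point:
  assumes "p = circle_cover \<theta>"
  obtains h where "continuous_on (S1 - {p}) h"
    "\<And>z. z \<in> S1 - {p} \<Longrightarrow> circle_cover (h z) = z \<and> h z \<in> {\<theta><..<\<theta> + 1}"
proof
  define h where "h z = \<theta> + Arg2pi (z / p) / (2 * pi)" for z
  have p: "p \<in> S1" "p \<noteq> 0"
    using assms circle_cover_in_S1 by (auto simp: circle_cover_def)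
  have off_ray: "z / p \<notin> \<real>\<^sub>\<ge>\<^sub>0" if "z \<in> S1 - {p}" for z
  proof
    assume "z / p \<in> \<real>\<^sub>\<ge>\<^sub>0"
    moreover have "norm (z / p) = 1"
      using that p by (simp add: S1_def norm_divide)
    ultimately have "z / p = 1"
      by (auto elim!: nonneg_Reals_cases)
    then show False
      using that p by simp
  qed
  show "continuous_on (S1 - {p}) h"
    unfolding h_def using off_ray p(2)
    by (intro continuous_intros continuous_at_imp_continuous_on ballI
          continuous_at_compose[unfolded o_def, OF _ continuous_at_Arg2pi]) auto
  fix z assume z: "z \<in> S1 - {p}"
  have "z / p \<in> S1"
    using z p by (simp add: S1_def norm_divide)
  then have "circle_cover (h z) = z"
    using p(2) by (simp add: h_def circle_cover_add circle_cover_Arg2pi flip: assms)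
  moreover have "0 < Arg2pi (z / p)"
    using off_ray[OF z] Arg2pi_ge_0[of "z / p"] Arg2pi_eq_0[of "z / p"]
    by (auto simp: complex_nonneg_Reals_iff complex_is_Real_iff)
  ultimately show "circle_cover (h z) = z \<and> h z \<in> {\<theta><..<\<theta> + 1}"
    using Arg2pi_lt_2pi[of "z / p"] by (simp add: h_def)
qed

lemma compact_S1: "compact S1"
  by (simp add: S1_def)

lemma subcontinuum_eq_circle_arc:
  assumes "A \<in> CS1"
  obtains a b where "0 \<le> a" "a < 1" "a \<le> b" "b \<le> a + 1" "A = circle_cover ` {a..b}"
proof (cases "A = S1")
  case True
  then show ?thesis
    using that[of 0 1] S1_eq_circle_cover_image by simp
next
  case False
  have A: "A \<subseteq> S1" "A \<noteq> {}" "closed A" "connected A"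
    using assms by (auto simp: CS1_def)
  then obtain p where p: "p \<in> S1" "p \<notin> A"
    using False by blast
  then obtain \<theta> where \<theta>: "p = circle_cover \<theta>"
    using S1_eq_circle_cover_image by blast
  obtain h where h: "continuous_on (S1 - {p}) h"
    "\<And>z. z \<in> S1 - {p} \<Longrightarrow> circle_cover (h z) = z \<and> h z \<in> {\<theta><..<\<theta> + 1}"
    using circle_cover_inverse_off_point[OF \<theta>] by blast
  have hA: "continuous_on A h"
    using h(1) by (rule continuous_on_subset) (use A(1) p(2) in blast)
  have "compact A"
    using A(1,3) compact_S1 by (metis compact_Int_closed inf.absorb_iff2)
  then obtain c d where cd: "h ` A = {c..d}"
    using connected_compact_interval_1 connected_continuous_image[OF hA A(4)]
      compact_continuous_image[OF hA] by metis
  have "c \<le> d" "c \<in> h ` A" "d \<in> h ` A"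
    using cd A(2) by auto
  then have "\<theta> < c" "d < \<theta> + 1"
    using h(2) A(1) p(2) by fastforce+
  have "A = circle_cover ` h ` A"
    using h(2) A(1) p(2) by (force simp: image_image)
  also have "\<dots> = circle_cover ` {c - of_int \<lfloor>c\<rfloor>..d - of_int \<lfloor>c\<rfloor>}"
    using circle_cover_image_shift[of "c - of_int \<lfloor>c\<rfloor>" "\<lfloor>c\<rfloor>" "d - of_int \<lfloor>c\<rfloor>"] cd by simp
  finally show ?thesis
    using that[of "c - of_int \<lfloor>c\<rfloor>" "d - of_int \<lfloor>c\<rfloor>"] \<open>c \<le> d\<close> \<open>\<theta> < c\<close> \<open>d < \<theta> + 1\<close>
    by linarith
qed

section \<open>Orbit codes of a monotone degree-one lift\<close>

lemma degree_one_add_nat: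
  fixes F :: "real \<Rightarrow> real"
  assumes "\<And>x. F (x + 1) = F x + 1"
  shows "F (x + real m) = F x + real m"
proof (induction m)
  case (Suc m)
  have "F (x + real (Suc m)) = F ((x + real m) + 1)"
    by (simp add: algebra_simps)
  also have "\<dots> = F x + real (Suc m)"
    using Suc assms by simp
  finally show ?case .
qed simp

lemma funpow_degree_one_add_nat:
  fixes F :: "real \<Rightarrow> real"
  assumes "\<And>x. F (x + 1) = F x + 1"
  shows "(F ^^ k) (x + real m) = (F ^^ k) x + real m"
  by (induction k) (simp_all add: degree_one_add_nat[of F, OF assms])

definition orbit_code :: "(real \<Rightarrow> real) \<Rightarrow> nat \<Rightarrow> nat \<Rightarrow> real \<Rightarrow> int" where
  "orbit_code F N n x = (\<Sum>k<n. \<lfloor>real N * (F ^^ k) x\<rfloor>)"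

lemma floor_orbit_mono:
  fixes F :: "real \<Rightarrow> real"
  assumes "mono F" "x \<le> y"
  shows "\<lfloor>real N * (F ^^ k) x\<rfloor> \<le> \<lfloor>real N * (F ^^ k) y\<rfloor>"
  using funpow_mono[OF assms] by (intro floor_mono mult_left_mono) auto

lemma mono_orbit_code:
  assumes "mono F"
  shows "mono (orbit_code F N n)"
  unfolding orbit_code_def using floor_orbit_mono[OF assms] by (intro monoI sum_mono) auto

lemma orbit_code_eq_imp_floor_eq:
  assumes "mono F" "x \<le> y" "orbit_code F N n x = orbit_code F N n y" "k < n"
  shows "\<lfloor>real N * (F ^^ k) x\<rfloor> = \<lfloor>real N * (F ^^ k) y\<rfloor>"
proof -
  have sum_0: "(\<Sum>j<n. \<lfloor>real N * (F ^^ j) y\<rfloor> - \<lfloor>real N * (F ^^ j) x\<rfloor>) = 0"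
    using assms(3) by (simp add: orbit_code_def sum_subtractf)
  have nonneg: "0 \<le> \<lfloor>real N * (F ^^ j) y\<rfloor> - \<lfloor>real N * (F ^^ j) x\<rfloor>" for j
    using floor_orbit_mono[OF assms(1,2)] by simp
  have "\<lfloor>real N * (F ^^ k) y\<rfloor> - \<lfloor>real N * (F ^^ k) x\<rfloor> = 0"
    using sum_nonneg_0[OF finite_lessThan nonneg sum_0] assms(4) by simp
  then show ?thesis
    by simp
qed

lemma floor_eq_imp_abs_diff_less_1:
  fixes u v :: real
  assumes "\<lfloor>u\<rfloor> = \<lfloor>v\<rfloor>"
  shows "\<bar>u - v\<bar> < 1"
  using floor_correct[of u] floor_correct[of v] assms by (simp add: abs_less_iff) linarith

lemma orbit_code_eq_imp_close:
  assumes "mono F" "orbit_code F N n x = orbit_code F N n y" "k < n" "N > 0"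
  shows "\<bar>(F ^^ k) x - (F ^^ k) y\<bar> < 1 / N"
proof -
  have "\<lfloor>real N * (F ^^ k) x\<rfloor> = \<lfloor>real N * (F ^^ k) y\<rfloor>"
  proof (cases "x \<le> y")
    case True
    then show ?thesis
      using orbit_code_eq_imp_floor_eq[OF assms(1) _ assms(2,3)] by blast
  next
    case False
    then show ?thesis
      using orbit_code_eq_imp_floor_eq[OF assms(1) _ assms(2)[symmetric] assms(3)] by simp
  qed
  then have "\<bar>real N * ((F ^^ k) x - (F ^^ k) y)\<bar> < 1"
    unfolding right_diff_distrib by (rule floor_eq_imp_abs_diff_less_1)
  then have "real N * \<bar>(F ^^ k) x - (F ^^ k) y\<bar> < 1"
    by (simp add: abs_mult)
  then show ?thesis
    using assms(4) by (simp add: pos_less_divide_eq mult.commute)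
qed

lemma orbit_code_add_nat:
  assumes "\<And>x. F (x + 1) = F x + 1"
  shows "orbit_code F N n (x + real m) = orbit_code F N n x + int (m * N * n)"
proof -
  have "real N * (F ^^ k) (x + real m) = real N * (F ^^ k) x + of_int (int (m * N))" for k
    by (simp add: funpow_degree_one_add_nat[of F, OF assms] algebra_simps)
  then have "orbit_code F N n (x + real m) = (\<Sum>k<n. \<lfloor>real N * (F ^^ k) x\<rfloor> + int (m * N))"
    unfolding orbit_code_def by (intro sum.cong refl) (simp only: floor_add_int)
  also have "\<dots> = orbit_code F N n x + int n * int (m * N)"
    by (simp add: orbit_code_def sum.distrib)
  finally show ?thesis
    by (metis mult.commute of_nat_mult)
qed

lemma orbit_code_range:
  assumes "mono F" "\<And>x. F (x + 1) = F x + 1" "0 \<le> x" "x \<le> real m"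
  shows "orbit_code F N n x \<in> {orbit_code F N n 0 .. orbit_code F N n 0 + int (m * N * n)}"
proof -
  have "orbit_code F N n (0 + real m) = orbit_code F N n 0 + int (m * N * n)"
    by (rule orbit_code_add_nat[of F, OF assms(2)])
  then show ?thesis
    using monoD[OF mono_orbit_code[OF assms(1), of N n], of 0 x]
      monoD[OF mono_orbit_code[OF assms(1), of N n], of x "real m"] assms(3,4)
    by simp
qed

section \<open>Separated families of subcontinua\<close>

lemma dH_le:
  assumes "r > 0" "X \<subseteq> Unbhd Y r" "Y \<subseteq> Unbhd X r"
  shows "dH X Y \<le> r"
  unfolding dH_def using assms by (intro cInf_lower bdd_belowI[of _ 0]) auto

lemma subset_Unbhd:
  assumes "\<And>z. z \<in> X \<Longrightarrow> \<exists>w\<in>Y. dist z w < r"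
  shows "X \<subseteq> Unbhd Y r"
  unfolding Unbhd_def using assms infdist_le le_less_trans by blast

lemma mono_endpoints_close_imp_close:
  fixes G :: "real \<Rightarrow> real"
  assumes "mono G" "a' \<le> b'" "\<bar>G a - G a'\<bar> < d" "\<bar>G b - G b'\<bar> < d" "x \<in> {a..b}"
  shows "\<exists>y\<in>{a'..b'}. \<bar>G x - G y\<bar> < d"
proof -
  consider "x < a'" | "b' < x" | "x \<in> {a'..b'}"
    by fastforce
  then show ?thesis
  proof cases
    case 1
    then have "G a \<le> G x" "G x \<le> G a'"
      using assms(5) monoD[OF assms(1)] by auto
    then show ?thesis
      using assms(2,3) by (intro bexI[of _ a']) auto
  next
    case 2
    then have "G b' \<le> G x" "G x \<le> G b"
      using assms(5) monoD[OF assms(1)] by auto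
    then show ?thesis
      using assms(2,4) by (intro bexI[of _ b']) auto
  next
    case 3
    then show ?thesis
      using assms(3) by (intro bexI[of _ x]) auto
  qed
qed

lemma circle_arc_image_subset_Unbhd:
  fixes G :: "real \<Rightarrow> real"
  assumes "mono G" "a' \<le> b'" "\<bar>G a - G a'\<bar> < d" "\<bar>G b - G b'\<bar> < d"
  shows "circle_cover ` G ` {a..b} \<subseteq> Unbhd (circle_cover ` G ` {a'..b'}) (2 * pi * d)"
proof (rule subset_Unbhd)
  fix z assume "z \<in> circle_cover ` G ` {a..b}"
  then obtain x where x: "x \<in> {a..b}" "z = circle_cover (G x)"
    by blast
  obtain y where y: "y \<in> {a'..b'}" "\<bar>G x - G y\<bar> < d"
    using mono_endpoints_close_imp_close[OF assms x(1)] by blast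
  have "dist z (circle_cover (G y)) \<le> 2 * pi * \<bar>G x - G y\<bar>"
    using x(2) dist_circle_cover_le by simp
  also have "\<dots> < 2 * pi * d"
    using y(2) by simp
  finally show "\<exists>w\<in>circle_cover ` G ` {a'..b'}. dist z w < 2 * pi * d"
    using y(1) by blast
qed

lemma dH_circle_arc_images_le:
  fixes G :: "real \<Rightarrow> real"
  assumes "mono G" "a \<le> b" "a' \<le> b'" "\<bar>G a - G a'\<bar> < d" "\<bar>G b - G b'\<bar> < d"
  shows "dH (circle_cover ` G ` {a..b}) (circle_cover ` G ` {a'..b'}) \<le> 2 * pi * d"
proof (rule dH_le)
  show "0 < 2 * pi * d"
    using assms(4) by simp
  show "circle_cover ` G ` {a..b} \<subseteq> Unbhd (circle_cover ` G ` {a'..b'}) (2 * pi * d)"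
    using assms by (intro circle_arc_image_subset_Unbhd) auto
  show "circle_cover ` G ` {a'..b'} \<subseteq> Unbhd (circle_cover ` G ` {a..b}) (2 * pi * d)"
    using assms by (intro circle_arc_image_subset_Unbhd) (auto simp: abs_minus_commute)
qed

lemma Cmap_funpow: "(Cmap f ^^ k) A = (f ^^ k) ` A"
  by (induction k) (auto simp: Cmap_def image_comp)

locale circle_lift =
  fixes f :: "complex \<Rightarrow> complex" and F :: "real \<Rightarrow> real"
  assumes mono_lift: "mono F"
    and lift_add_1: "\<And>x. F (x + 1) = F x + 1"
    and lift: "\<And>x. f (circle_cover x) = circle_cover (F x)"
begin

lemma mono_funpow_lift: "mono (F ^^ k)"
  using funpow_mono[OF mono_lift] by (rule monoI)

lemma Cmap_funpow_circle_arc: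
  "(Cmap f ^^ k) (circle_cover ` {a..b}) = circle_cover ` (F ^^ k) ` {a..b}"
proof -
  have "(f ^^ k) (circle_cover x) = circle_cover ((F ^^ k) x)" for x
    by (induction k) (simp_all add: lift)
  then show ?thesis
    by (simp add: Cmap_funpow image_image)
qed

lemma bowen_dist_circle_arcs_le:
  assumes "N > 0" "n \<ge> 1" "a \<le> b" "a' \<le> b'"
    "orbit_code F N n a = orbit_code F N n a'" "orbit_code F N n b = orbit_code F N n b'"
  shows "bowen_dist dH (Cmap f) n (circle_cover ` {a..b}) (circle_cover ` {a'..b'}) \<le> 2 * pi / N"
proof -
  have "dH ((Cmap f ^^ k) (circle_cover ` {a..b})) ((Cmap f ^^ k) (circle_cover ` {a'..b'}))
      \<le> 2 * pi / N" if "k < n" for k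
    using dH_circle_arc_images_le[OF mono_funpow_lift assms(3,4)
        orbit_code_eq_imp_close[OF mono_lift assms(5) that assms(1)]
        orbit_code_eq_imp_close[OF mono_lift assms(6) that assms(1)]]
    by (simp add: Cmap_funpow_circle_arc)
  moreover have "{..<n} \<noteq> {}"
    using assms(2) by (simp add: lessThan_empty_iff)
  ultimately show ?thesis
    unfolding bowen_dist_def by (simp add: Max_le_iff)
qed

lemma card_separated_subcontinua_le:
  assumes "N > 0" "2 * pi / N < e" "n \<ge> 1" "E \<subseteq> CS1" "separated_set dH (Cmap f) n e E"
  shows "card E \<le> (2 * N * n + 1)^2"
proof -
  have "\<exists>a b. 0 \<le> a \<and> a \<le> b \<and> b \<le> 2 \<and> A = circle_cover ` {a..b}" if A: "A \<in> E" for A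
  proof -
    obtain a b where "0 \<le> a" "a < 1" "a \<le> b" "b \<le> a + 1" "A = circle_cover ` {a..b}"
      using subcontinuum_eq_circle_arc[of A] A assms(4) by blast
    then show ?thesis
      by (intro exI[of _ a] exI[of _ b]) simp
  qed
  then obtain lo hi where arc: "\<And>A. A \<in> E \<Longrightarrow>
      0 \<le> lo A \<and> lo A \<le> hi A \<and> hi A \<le> 2 \<and> A = circle_cover ` {lo A..hi A}"
    by metis
  define code where "code A = (orbit_code F N n (lo A), orbit_code F N n (hi A))" for A
  have "inj_on code E"
  proof (rule inj_onI, rule ccontr)
    fix A B assume AB: "A \<in> E" "B \<in> E" "code A = code B" "A \<noteq> B"
    have "bowen_dist dH (Cmap f) n A B \<le> 2 * pi / N"
      using bowen_dist_circle_arcs_le[OF assms(1,3), of "lo A" "hi A" "lo B" "hi B"]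
        arc[OF AB(1)] arc[OF AB(2)] AB(3)
      by (simp add: code_def)
    moreover have "e \<le> bowen_dist dH (Cmap f) n A B"
      using assms(5) AB by (simp add: separated_set_def)
    ultimately show False
      using assms(2) by simp
  qed
  define I where "I = {orbit_code F N n 0 .. orbit_code F N n 0 + int (2 * N * n)}"
  have card_I: "card I = 2 * N * n + 1"
    unfolding I_def by (simp del: of_nat_mult)
  have "code ` E \<subseteq> I \<times> I"
    using arc orbit_code_range[OF mono_lift lift_add_1, of _ 2 N n]
    by (fastforce simp: code_def I_def)
  then have "card (code ` E) \<le> card (I \<times> I)"
    by (intro card_mono) (simp_all add: I_def)
  then have "card E \<le> card (I \<times> I)"
    by (simp add: card_image[OF \<open>inj_on code E\<close>])
  also have "card (I \<times> I) = (2 * N * n + 1)^2"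
    using card_I by (simp add: card_cartesian_product power2_eq_square)
  finally show ?thesis .
qed

lemma card_separated_subcontinua_poly_bound:
  assumes "e > 0"
  shows "\<exists>C. \<forall>n\<ge>1. \<forall>E\<subseteq>CS1.
    separated_set dH (Cmap f) n e E \<longrightarrow> real (card E) \<le> C * real n powr 2"
proof -
  obtain N :: nat where N: "2 * pi / e < real N"
    using reals_Archimedean2 by blast
  have "0 < 2 * pi / e"
    using assms by simp
  then have "N > 0"
    using N by linarith
  have "2 * pi < real N * e"
    using N assms by (simp add: divide_less_eq)
  then have "2 * pi / N < e"
    using \<open>N > 0\<close> by (simp add: divide_less_eq mult.commute)
  have "real (card E) \<le> (3 * real N)^2 * real n powr 2"
    if "n \<ge> 1" "E \<subseteq> CS1" "separated_set dH (Cmap f) n e E" for n E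
  proof -
    have "card E \<le> (2 * N * n + 1)^2"
      using \<open>N > 0\<close> \<open>2 * pi / N < e\<close> that by (rule card_separated_subcontinua_le)
    then have "real (card E) \<le> real ((2 * N * n + 1)^2)"
      by (simp only: of_nat_le_iff)
    also have "\<dots> = (2 * real N * real n + 1)^2"
      by simp
    also have "\<dots> \<le> (3 * real N * real n)^2"
    proof -
      have "1 \<le> real N * real n"
        using \<open>N > 0\<close> that(1) mult_mono[of 1 "real N" 1 "real n"] by simp
      then show ?thesis
        by (intro power_mono) simp_all
    qed
    also have "\<dots> = (3 * real N)^2 * real n powr 2"
      by (simp add: power_mult_distrib)
    finally show ?thesis .
  qed
  then show ?thesis
    by blast
qed

end

theorem proposition1:
  fixes f :: "complex \<Rightarrow> complex"
  assumes "orient_pres_homeo f"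
  shows "h_pol dH CS1 (Cmap f) \<le> 2"
proof -
  obtain F :: "real \<Rightarrow> real" where "strict_mono F" "\<And>x. F (x + 1) = F x + 1"
    "\<And>x. f (cis (2 * pi * x)) = cis (2 * pi * F x)"
    using assms unfolding orient_pres_homeo_def by blast
  then interpret circle_lift f F
    by unfold_locales (simp_all add: strict_mono_mono circle_cover_def)
  have "S1 \<in> CS1"
    by (auto simp: CS1_def S1_def connected_sphere)
  then have "CS1 \<noteq> {}"
    by blast
  then have "h_pol dH CS1 (Cmap f) \<le> ereal 2"
    by (rule h_pol_le_of_card_separated_le) (rule card_separated_subcontinua_poly_bound)
  then show ?thesis
    by simp
qed

end
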